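(* Let $\tau>0$, $u_n\in\mathcal V_{[0,1]}$ with $M:=\mathcal M(u_n)\in(0,\mathcal M(\mathbf 1))$. Let $\alpha_1<\dots<\alpha_K$ be the distinct values of $e^{-\tau\Delta}u_n$, $a_\alpha:=\sum_{i:(e^{-\tau\Delta}u_n)_i=\alpha}d_i^r$, and $k\in\{1,\dots,K\}$ the unique index with $\sum_{l=k+1}^K a_{\alpha_l} < M \leq \sum_{l=k}^K a_{\alpha_l}$. For $0\le\lambda<1$ let $u^\lambda_{n+1}$ be the unique minimiser of $(1-\lambda)\|u\|^2_{\mathcal V}-2\langle u,e^{-\tau\Delta}u_n\rangle_{\mathcal V}$ over $\{u\in\mathcal V_{[0,1]}:\mathcal M(u)=M\}$. Then there is $\delta>0$, depending only on $e^{-\tau\Delta}u_n$, such that for every $\lambda\in(1-\delta,1)$ and all $i\in V$ \[ (u^\lambda _{n+1})_i=\begin{cases} 0, &\text{if } (e^{-\tau\Delta}u_n)_i< \alpha_{k}, \\ a_{\alpha_k}^{-1}\left(M - \sum_{l=k+1}^K a_{\alpha_l}\right) , &\text{if } (e^{-\tau\Delta}u_n)_i =\alpha_k,\\ 1, &\text{if } (e^{-\tau\Delta}u_n)_i > \alpha_{k}, \end{cases} \] and hence $u^\lambda_{n+1}$ converges as $\lambda\uparrow1$ to the function given by the right-hand side.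
   Context: $G=(V,E)$ is a finite, simple, connected, undirected graph with weights $\omega_{ij}=\omega_{ji}>0$ for $ij\in E$, $\omega_{ij}=0$ otherwise; $d_i=\sum_j\omega_{ij}$, $r\in[0,1]$ fixed. $\mathcal V$ = functions $V\to\mathbb R$ with $\langle u,v\rangle_{\mathcal V}=\sum_i u_iv_id_i^r$ and norm $\|\cdot\|_{\mathcal V}$; $\mathcal V_{[0,1]}$ = functions $V\to[0,1]$. $(\Delta u)_i=d_i^{-r}\sum_j\omega_{ij}(u_i-u_j)$, $e^{-\tau\Delta}$ its matrix exponential. $\mathbf 1$ all-ones; $\mathcal M(u)=\langle u,\mathbf 1\rangle_{\mathcal V}$. *)

theory Defs
  imports "HOL-Analysis.Analysis"
begin

text \<open>Vertices are the elements of a finite type 'n; functions V to R are vectors real^'n.\<close>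

definition weighted_graph :: "('n::finite \<Rightarrow> 'n \<Rightarrow> real) \<Rightarrow> bool" where
  "weighted_graph w \<longleftrightarrow>
     (\<forall>i j. w i j = w j i) \<and> (\<forall>i j. 0 \<le> w i j) \<and> (\<forall>i. w i i = 0) \<and>
     (\<forall>i j. (i, j) \<in> {(a, b). 0 < w a b}\<^sup>*)"

definition deg :: "('n::finite \<Rightarrow> 'n \<Rightarrow> real) \<Rightarrow> 'n \<Rightarrow> real" where
  "deg w i = (\<Sum>j\<in>UNIV. w i j)"

text \<open>Real power with the convention x^0 = 1 (Isabelle's powr has 0 powr 0 = 0).\<close>
definition rpow :: "real \<Rightarrow> real \<Rightarrow> real" where
  "rpow x r = (if r = 0 then 1 else x powr r)"

definition dr :: "('n::finite \<Rightarrow> 'n \<Rightarrow> real) \<Rightarrow> real \<Rightarrow> 'n \<Rightarrow> real" where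
  "dr w r i = rpow (deg w i) r"

definition lap :: "('n::finite \<Rightarrow> 'n \<Rightarrow> real) \<Rightarrow> real \<Rightarrow> real^'n \<Rightarrow> real^'n" where
  "lap w r u = (\<chi> i. inverse (dr w r i) * (\<Sum>j\<in>UNIV. w i j * (u $ i - u $ j)))"

definition heat :: "('n::finite \<Rightarrow> 'n \<Rightarrow> real) \<Rightarrow> real \<Rightarrow> real \<Rightarrow> real^'n \<Rightarrow> real^'n" where
  "heat w r \<tau> u = (\<Sum>k. (((- \<tau>) ^ k) / fact k) *\<^sub>R ((lap w r ^^ k) u))"

definition ipV :: "('n::finite \<Rightarrow> 'n \<Rightarrow> real) \<Rightarrow> real \<Rightarrow> real^'n \<Rightarrow> real^'n \<Rightarrow> real" where
  "ipV w r u v = (\<Sum>i\<in>UNIV. u $ i * v $ i * dr w r i)"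

definition ones :: "real^'n::finite" where
  "ones = (\<chi> i. 1)"

definition mass :: "('n::finite \<Rightarrow> 'n \<Rightarrow> real) \<Rightarrow> real \<Rightarrow> real^'n \<Rightarrow> real" where
  "mass w r u = ipV w r u ones"

definition unit_valued :: "real^'n::finite \<Rightarrow> bool" where
  "unit_valued u \<longleftrightarrow> (\<forall>i. 0 \<le> u $ i \<and> u $ i \<le> 1)"

definition objective :: "('n::finite \<Rightarrow> 'n \<Rightarrow> real) \<Rightarrow> real \<Rightarrow> real \<Rightarrow> real^'n \<Rightarrow> real^'n \<Rightarrow> real" where
  "objective w r lam v u = (1 - lam) * ipV w r u u - 2 * ipV w r u v"

definition is_minimiser :: "('n::finite \<Rightarrow> 'n \<Rightarrow> real) \<Rightarrow> real \<Rightarrow> real \<Rightarrow> real \<Rightarrow> real^'n \<Rightarrow> real^'n \<Rightarrow> bool" where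
  "is_minimiser w r lam M v u \<longleftrightarrow>
     unit_valued u \<and> mass w r u = M \<and>
     (\<forall>u'. unit_valued u' \<and> mass w r u' = M \<longrightarrow> objective w r lam v u \<le> objective w r lam v u')"

definition values_sorted :: "real^'n::finite \<Rightarrow> real list" where
  "values_sorted v = sorted_list_of_set (range (\<lambda>i. v $ i))"

definition level_mass :: "('n::finite \<Rightarrow> 'n \<Rightarrow> real) \<Rightarrow> real \<Rightarrow> real^'n \<Rightarrow> real \<Rightarrow> real" where
  "level_mass w r v \<alpha> = (\<Sum>i\<in>{i. v $ i = \<alpha>}. dr w r i)"

end

theory Submission
  imports Defs
begin

text \<open>Write \<open>\<epsilon> = 1 - \<lambda>\<close> and \<open>v = e^{-\<tau>\<Delta>}u\<^sub>n\<close>. The candidate \<open>t\<close> thresholds \<open>v\<close> at \<open>\<alpha>\<^sub>k\<close>,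
  taking on the level set of \<open>\<alpha>\<^sub>k\<close> the value \<open>\<theta> \<in> [0,1]\<close> for which \<open>\<M>(t) = M\<close>.
  Expanding the square, \<open>F(u) - F(t) - \<epsilon>\<parallel>u - t\<parallel>\<^sup>2 = 2\<langle>u - t, \<epsilon>t - v\<rangle>\<close> for the objective \<open>F\<close>,
  and since \<open>\<M>(u) = \<M>(t)\<close> the constant \<open>\<alpha>\<^sub>k - \<epsilon>\<theta>\<close> may be added to \<open>\<epsilon>t - v\<close>. Once \<open>\<epsilon>\<close> is
  below the gap between \<open>\<alpha>\<^sub>k\<close> and the other values of \<open>v\<close>, the shifted function is \<open>\<ge> 0\<close>
  where \<open>t = 0\<close>, \<open>\<le> 0\<close> where \<open>t = 1\<close> and \<open>0\<close> on the level set, which are the signs of \<open>u - t\<close>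
  for \<open>0 \<le> u \<le> 1\<close>. Hence \<open>F(u) \<ge> F(t) + \<epsilon>\<parallel>u - t\<parallel>\<^sup>2\<close> and \<open>t\<close> is the unique minimiser.\<close>

definition threshold_profile :: "real^'n::finite \<Rightarrow> real \<Rightarrow> real \<Rightarrow> real^'n" where
  "threshold_profile v \<alpha> \<theta> = (\<chi> i. if v $ i < \<alpha> then 0 else if v $ i = \<alpha> then \<theta> else 1)"

lemma unit_valued_threshold_profile:
  "0 \<le> \<theta> \<Longrightarrow> \<theta> \<le> 1 \<Longrightarrow> unit_valued (threshold_profile v \<alpha> \<theta>)"
  unfolding unit_valued_def threshold_profile_def by simp

lemma threshold_profile_variational_inequality:
  fixes u v :: "real^'n::finite" and d :: "'n \<Rightarrow> real" and \<alpha> \<theta> \<epsilon> :: real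
  defines "t \<equiv> threshold_profile v \<alpha> \<theta>"
  assumes d: "\<And>i. 0 \<le> d i" and \<theta>: "0 \<le> \<theta>" "\<theta> \<le> 1" and \<epsilon>: "0 \<le> \<epsilon>"
    and gap: "\<And>i. v $ i \<noteq> \<alpha> \<Longrightarrow> \<epsilon> \<le> \<bar>v $ i - \<alpha>\<bar>"
    and u: "unit_valued u"
    and same_mass: "(\<Sum>i\<in>UNIV. u $ i * d i) = (\<Sum>i\<in>UNIV. t $ i * d i)"
  shows "(\<Sum>i\<in>UNIV. (\<epsilon> * (t $ i)\<^sup>2 - 2 * t $ i * v $ i) * d i) + \<epsilon> * (\<Sum>i\<in>UNIV. (u $ i - t $ i)\<^sup>2 * d i)
         \<le> (\<Sum>i\<in>UNIV. (\<epsilon> * (u $ i)\<^sup>2 - 2 * u $ i * v $ i) * d i)"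
proof -
  define c where "c = \<alpha> - \<epsilon> * \<theta>"
  have sign: "0 \<le> (u $ i - t $ i) * (\<epsilon> * t $ i - v $ i + c)" for i
  proof -
    have u01: "0 \<le> u $ i" "u $ i \<le> 1" using u unfolding unit_valued_def by auto
    consider "v $ i < \<alpha>" | "v $ i = \<alpha>" | "\<alpha> < v $ i" by linarith
    then show ?thesis
    proof cases
      case 1
      have "\<epsilon> * \<theta> \<le> \<epsilon>" using \<theta> \<epsilon> by (simp add: mult_left_le)
      with 1 gap[of i] have "0 \<le> - v $ i + c" unfolding c_def by simp
      with 1 u01 show ?thesis unfolding t_def threshold_profile_def by simp
    next
      case 2
      then show ?thesis unfolding t_def threshold_profile_def c_def by simp
    next
      case 3
      have "0 \<le> \<epsilon> * \<theta>" using \<theta> \<epsilon> by simp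
      with 3 gap[of i] have "\<epsilon> - v $ i + c \<le> 0" unfolding c_def by simp
      with 3 u01 show ?thesis unfolding t_def threshold_profile_def
        by (simp add: mult_nonpos_nonpos)
    qed
  qed
  have "(\<Sum>i\<in>UNIV. (\<epsilon> * (u $ i)\<^sup>2 - 2 * u $ i * v $ i) * d i)
        - (\<Sum>i\<in>UNIV. (\<epsilon> * (t $ i)\<^sup>2 - 2 * t $ i * v $ i) * d i) - \<epsilon> * (\<Sum>i\<in>UNIV. (u $ i - t $ i)\<^sup>2 * d i)
      = (\<Sum>i\<in>UNIV. 2 * d i * ((u $ i - t $ i) * (\<epsilon> * t $ i - v $ i + c)))
        - 2 * c * ((\<Sum>i\<in>UNIV. u $ i * d i) - (\<Sum>i\<in>UNIV. t $ i * d i))"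
    by (simp add: sum_subtractf[symmetric] sum_distrib_left algebra_simps power2_eq_square)
  also have "\<dots> = (\<Sum>i\<in>UNIV. 2 * d i * ((u $ i - t $ i) * (\<epsilon> * t $ i - v $ i + c)))"
    using same_mass by simp
  also have "\<dots> \<ge> 0"
    using d sign by (intro sum_nonneg) simp
  finally show ?thesis by linarith
qed

lemma mass_eq_sum: "mass w r u = (\<Sum>i\<in>UNIV. u $ i * dr w r i)"
  unfolding mass_def ipV_def ones_def by simp

lemma objective_eq_sum:
  "objective w r lam v u = (\<Sum>i\<in>UNIV. ((1 - lam) * (u $ i)\<^sup>2 - 2 * u $ i * v $ i) * dr w r i)"
  unfolding objective_def ipV_def
  by (simp add: sum_distrib_left sum_subtractf[symmetric] algebra_simps power2_eq_square)

lemma deg_nonneg: "weighted_graph w \<Longrightarrow> 0 \<le> deg w i"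
  unfolding weighted_graph_def deg_def by (simp add: sum_nonneg)

lemma deg_eq_0_imp_UNIV_singleton:
  assumes w: "weighted_graph w" and deg0: "deg w i = 0"
  shows "UNIV = {i}"
proof -
  have "(\<Sum>j\<in>UNIV. w i j) = 0" "\<forall>j. 0 \<le> w i j"
    using w deg0 unfolding weighted_graph_def deg_def by auto
  then have isolated: "w i j = 0" for j
    by (simp add: sum_nonneg_eq_0_iff)
  have "j = i" for j
  proof -
    have "(i, j) \<in> {(a, b). 0 < w a b}\<^sup>*"
      using w unfolding weighted_graph_def by blast
    then show ?thesis
      by (cases rule: converse_rtranclE) (use isolated in auto)
  qed
  then show ?thesis by auto
qed

text \<open>The mass hypothesis only excludes the one-vertex graph, where \<open>d = 0\<close> and hence
  \<open>d\<^sup>r = 0 powr r = 0\<close> for \<open>r \<noteq> 0\<close>.\<close>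

lemma dr_pos_if_mass_nonzero:
  assumes w: "weighted_graph w" and mass: "mass w r u \<noteq> 0"
  shows "0 < dr w r i"
proof (cases "r = 0 \<or> deg w i \<noteq> 0")
  case True
  with deg_nonneg[OF w, of i] show ?thesis
    unfolding dr_def rpow_def by auto
next
  case False
  then have "dr w r i = 0" unfolding dr_def rpow_def by simp
  moreover have single: "UNIV = {i}"
    using deg_eq_0_imp_UNIV_singleton[OF w] False by simp
  have "mass w r u = u $ i * dr w r i"
    unfolding mass_eq_sum single by simp
  ultimately show ?thesis using mass by simp
qed

lemma is_minimiser_iff_threshold_profile:
  fixes v :: "real^'n::finite" and \<alpha> \<theta> :: real
  defines "t \<equiv> threshold_profile v \<alpha> \<theta>"
  assumes dr_pos: "\<And>i. 0 < dr w r i" and \<theta>: "0 \<le> \<theta>" "\<theta> \<le> 1" and lam: "lam < 1"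
    and gap: "\<And>i. v $ i \<noteq> \<alpha> \<Longrightarrow> 1 - lam \<le> \<bar>v $ i - \<alpha>\<bar>"
    and mass_t: "mass w r t = M"
  shows "is_minimiser w r lam M v u \<longleftrightarrow> u = t"
proof -
  have dr_nonneg: "0 \<le> dr w r i" for i
    using dr_pos[of i] by simp
  have dist_nonneg: "0 \<le> (\<Sum>i\<in>UNIV. (u' $ i - t $ i)\<^sup>2 * dr w r i)" for u'
    using dr_nonneg by (simp add: sum_nonneg)
  have strong: "objective w r lam v t + (1 - lam) * (\<Sum>i\<in>UNIV. (u' $ i - t $ i)\<^sup>2 * dr w r i)
      \<le> objective w r lam v u'" if "unit_valued u'" "mass w r u' = M" for u'
    unfolding objective_eq_sum t_def
    using that mass_t dr_pos \<theta> lam gap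
    by (intro threshold_profile_variational_inequality) (auto simp: mass_eq_sum t_def dr_nonneg)
  have t_unit: "unit_valued t"
    unfolding t_def using \<theta> by (rule unit_valued_threshold_profile)
  show ?thesis
  proof
    assume min: "is_minimiser w r lam M v u"
    then have "objective w r lam v u \<le> objective w r lam v t"
      using t_unit mass_t unfolding is_minimiser_def by blast
    with strong[of u] min have "(1 - lam) * (\<Sum>i\<in>UNIV. (u $ i - t $ i)\<^sup>2 * dr w r i) \<le> 0"
      unfolding is_minimiser_def by linarith
    with lam have "(\<Sum>i\<in>UNIV. (u $ i - t $ i)\<^sup>2 * dr w r i) \<le> 0"
      by (simp add: mult_le_0_iff)
    with dist_nonneg[of u] have "(\<Sum>i\<in>UNIV. (u $ i - t $ i)\<^sup>2 * dr w r i) = 0"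
      by linarith
    then have "\<forall>i\<in>UNIV. (u $ i - t $ i)\<^sup>2 * dr w r i = 0"
      using dr_nonneg by (simp add: sum_nonneg_eq_0_iff)
    with dr_pos show "u = t"
      by (simp add: vec_eq_iff) (metis less_irrefl)
  next
    assume "u = t"
    have "objective w r lam v t \<le> objective w r lam v u'"
      if "unit_valued u'" "mass w r u' = M" for u'
    proof -
      have "0 \<le> (1 - lam) * (\<Sum>i\<in>UNIV. (u' $ i - t $ i)\<^sup>2 * dr w r i)"
        using dist_nonneg[of u'] lam by simp
      with strong[OF that] show ?thesis by linarith
    qed
    with \<open>u = t\<close> t_unit mass_t show "is_minimiser w r lam M v u"
      unfolding is_minimiser_def by blast
  qed
qed

lemma strict_sorted_nth_image_greater:
  fixes xs :: "'a::linorder list"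
  assumes sorted: "sorted_wrt (<) xs" and k: "k < length xs"
  shows "(!) xs ` {Suc k..<length xs} = {x \<in> set xs. xs ! k < x}"
proof -
  have less_iff: "xs ! k < xs ! j \<longleftrightarrow> k < j" if "j < length xs" for j
    using sorted k that unfolding sorted_wrt_iff_nth_less
    by (cases k j rule: linorder_cases) (auto dest: less_asym)
  show ?thesis
  proof (intro equalityI subsetI)
    fix x assume "x \<in> {x \<in> set xs. xs ! k < x}"
    then obtain j where "j < length xs" "x = xs ! j" "xs ! k < x"
      by (auto simp: in_set_conv_nth)
    with less_iff show "x \<in> (!) xs ` {Suc k..<length xs}" by auto
  qed (use less_iff in auto)
qed

lemma sum_level_mass_greater:
  fixes v :: "real^'n::finite"
  defines "\<alpha>s \<equiv> values_sorted v"
  assumes k: "k < length \<alpha>s"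
  shows "(\<Sum>l\<in>{Suc k..<length \<alpha>s}. level_mass w r v (\<alpha>s ! l)) = (\<Sum>i | \<alpha>s ! k < v $ i. dr w r i)"
proof -
  have sorted: "sorted_wrt (<) \<alpha>s" and set_\<alpha>s: "set \<alpha>s = range (($) v)"
    unfolding \<alpha>s_def values_sorted_def by simp_all
  have "inj_on ((!) \<alpha>s) {Suc k..<length \<alpha>s}"
    using sorted by (auto intro!: inj_onI simp: nth_eq_iff_index_eq strict_sorted_iff)
  then have "(\<Sum>l\<in>{Suc k..<length \<alpha>s}. level_mass w r v (\<alpha>s ! l))
      = (\<Sum>x \<in> (!) \<alpha>s ` {Suc k..<length \<alpha>s}. level_mass w r v x)"
    by (simp add: sum.reindex)
  also have "\<dots> = (\<Sum>x \<in> {x \<in> range (($) v). \<alpha>s ! k < x}. level_mass w r v x)"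
    using strict_sorted_nth_image_greater[OF sorted k] set_\<alpha>s by simp
  also have "\<dots> = (\<Sum>x \<in> {x \<in> range (($) v). \<alpha>s ! k < x}. \<Sum>i | i \<in> {i. \<alpha>s ! k < v $ i} \<and> v $ i = x. dr w r i)"
    unfolding level_mass_def by (intro sum.cong) auto
  also have "\<dots> = (\<Sum>i | \<alpha>s ! k < v $ i. dr w r i)"
    by (rule sum.group) auto
  finally show ?thesis .
qed

lemma level_mass_pos:
  "(\<And>j. 0 < dr w r j) \<Longrightarrow> v $ i = \<alpha> \<Longrightarrow> 0 < level_mass w r v \<alpha>"
  unfolding level_mass_def
  by (rule sum_pos2[where i = i]) (auto intro: less_imp_le)

lemma mass_threshold_profile:
  "mass w r (threshold_profile v \<alpha> \<theta>) = (\<Sum>i | \<alpha> < v $ i. dr w r i) + \<theta> * level_mass w r v \<alpha>"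
proof -
  have "mass w r (threshold_profile v \<alpha> \<theta>)
      = (\<Sum>i\<in>UNIV. (if \<alpha> < v $ i then dr w r i else 0) + \<theta> * (if v $ i = \<alpha> then dr w r i else 0))"
    unfolding mass_eq_sum threshold_profile_def by (intro sum.cong) auto
  then show ?thesis
    unfolding level_mass_def by (simp add: sum.distrib sum_distrib_left[symmetric] sum.If_cases)
qed

lemma is_minimiser_iff_threshold_profile_near_1:
  fixes v :: "real^'n::finite" and \<alpha> \<theta> :: real
  assumes dr_pos: "\<And>i. 0 < dr w r i" and \<theta>: "0 \<le> \<theta>" "\<theta> \<le> 1"
    and mass_t: "mass w r (threshold_profile v \<alpha> \<theta>) = M"
  shows "\<exists>\<delta>>0. \<forall>lam. 1 - \<delta> < lam \<and> lam < 1 \<longrightarrow>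
           (\<forall>u. is_minimiser w r lam M v u \<longleftrightarrow> u = threshold_profile v \<alpha> \<theta>)"
proof -
  obtain \<delta> where \<delta>: "0 < \<delta>" and gap: "\<And>x. x \<in> range (($) v) \<Longrightarrow> x \<noteq> \<alpha> \<Longrightarrow> \<delta> \<le> dist \<alpha> x"
    using finite_set_avoid[of "range (($) v)" \<alpha>] by auto
  have "\<forall>u. is_minimiser w r lam M v u \<longleftrightarrow> u = threshold_profile v \<alpha> \<theta>"
    if lam: "1 - \<delta> < lam" "lam < 1" for lam
  proof -
    have "1 - lam \<le> \<bar>v $ i - \<alpha>\<bar>" if "v $ i \<noteq> \<alpha>" for i
      using gap[of "v $ i"] that lam by (simp add: dist_real_def abs_minus_commute)
    with is_minimiser_iff_threshold_profile[OF dr_pos \<theta> lam(2) _ mass_t] show ?thesis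
      by blast
  qed
  with \<delta> show ?thesis by blast
qed

lemma threshold_profile_mass_eq:
  fixes w :: "'n::finite \<Rightarrow> 'n \<Rightarrow> real" and r :: real and v :: "real^'n" and k :: nat
  defines "\<alpha>s \<equiv> values_sorted v"
  defines "S \<equiv> (\<Sum>l\<in>{Suc k..<length \<alpha>s}. level_mass w r v (\<alpha>s ! l))"
    and "a \<equiv> level_mass w r v (\<alpha>s ! k)"
  assumes dr_pos: "\<And>i. 0 < dr w r i" and k: "k < length \<alpha>s"
    and S_less: "S < M" and M_le: "M \<le> (\<Sum>l\<in>{k..<length \<alpha>s}. level_mass w r v (\<alpha>s ! l))"
  shows "0 \<le> (M - S) / a" "(M - S) / a \<le> 1"
    and "mass w r (threshold_profile v (\<alpha>s ! k) ((M - S) / a)) = M"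
proof -
  obtain i where "v $ i = \<alpha>s ! k"
    using k nth_mem[of k \<alpha>s] unfolding \<alpha>s_def values_sorted_def by auto
  with dr_pos have a_pos: "0 < a"
    unfolding a_def by (rule level_mass_pos)
  moreover have "M \<le> a + S"
    using M_le k unfolding a_def S_def by (simp add: sum.atLeast_Suc_lessThan)
  ultimately show "0 \<le> (M - S) / a" "(M - S) / a \<le> 1"
    using S_less by (simp_all add: field_simps)
  have "mass w r (threshold_profile v (\<alpha>s ! k) ((M - S) / a)) = S + (M - S) / a * a"
    using sum_level_mass_greater[of k v w r] k
    unfolding mass_threshold_profile S_def a_def \<alpha>s_def by simp
  with a_pos show "mass w r (threshold_profile v (\<alpha>s ! k) ((M - S) / a)) = M"
    by simp
qed

lemma tendsto_The_eventually_unique: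
  assumes "eventually (\<lambda>x. \<forall>y. P x y \<longleftrightarrow> y = c) F"
  shows "((\<lambda>x. THE y. P x y) \<longlongrightarrow> c) F"
proof (rule tendsto_cong[THEN iffD2, OF _ tendsto_const])
  show "\<forall>\<^sub>F x in F. (THE y. P x y) = c"
    using assms by (rule eventually_mono) simp
qed

theorem theorem31:
  fixes w :: "'n::finite \<Rightarrow> 'n \<Rightarrow> real" and r \<tau> :: real and un :: "real^'n" and k :: nat
  assumes "weighted_graph w" and "0 \<le> r" and "r \<le> 1" and "0 < \<tau>"
    and "unit_valued un"
    and "0 < mass w r un" and "mass w r un < mass w r ones"
    and "k < length (values_sorted (heat w r \<tau> un))"
    and "(\<Sum>l\<in>{Suc k..<length (values_sorted (heat w r \<tau> un))}.
            level_mass w r (heat w r \<tau> un) (values_sorted (heat w r \<tau> un) ! l)) < mass w r un"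
    and "mass w r un \<le> (\<Sum>l\<in>{k..<length (values_sorted (heat w r \<tau> un))}.
            level_mass w r (heat w r \<tau> un) (values_sorted (heat w r \<tau> un) ! l))"
  shows "let v = heat w r \<tau> un; M = mass w r un; \<alpha>s = values_sorted v; K = length \<alpha>s;
             target = (\<chi> i. if v $ i < \<alpha>s ! k then 0
                             else if v $ i = \<alpha>s ! k then
                               (M - (\<Sum>l\<in>{Suc k..<K}. level_mass w r v (\<alpha>s ! l))) / level_mass w r v (\<alpha>s ! k)
                             else 1)
         in (\<exists>\<delta>>0. \<forall>lam. 1 - \<delta> < lam \<and> lam < 1 \<longrightarrow>
                 (\<forall>u. is_minimiser w r lam M v u \<longleftrightarrow> u = target))
            \<and> ((\<lambda>lam. THE u. is_minimiser w r lam M v u) \<longlongrightarrow> target) (at_left 1)"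
proof -
  define v where "v = heat w r \<tau> un"
  define M where "M = mass w r un"
  define \<alpha>s where "\<alpha>s = values_sorted v"
  define S where "S = (\<Sum>l\<in>{Suc k..<length \<alpha>s}. level_mass w r v (\<alpha>s ! l))"
  define t where "t = threshold_profile v (\<alpha>s ! k) ((M - S) / level_mass w r v (\<alpha>s ! k))"
  have dr_pos: "0 < dr w r i" for i
    using dr_pos_if_mass_nonzero[OF assms(1)] assms(6) by (metis less_irrefl)
  have "0 \<le> (M - S) / level_mass w r v (\<alpha>s ! k)" "(M - S) / level_mass w r v (\<alpha>s ! k) \<le> 1"
    "mass w r t = M"
    using threshold_profile_mass_eq[OF dr_pos, of k v] assms(8-10)
    unfolding t_def S_def M_def \<alpha>s_def v_def by simp_all
  then obtain \<delta> where \<delta>: "0 < \<delta>"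
    and unique: "\<forall>lam. 1 - \<delta> < lam \<and> lam < 1 \<longrightarrow> (\<forall>u. is_minimiser w r lam M v u \<longleftrightarrow> u = t)"
    unfolding t_def using is_minimiser_iff_threshold_profile_near_1[OF dr_pos] by blast
  have "eventually (\<lambda>lam. 1 - \<delta> < lam \<and> lam < 1) (at_left (1::real))"
    using \<delta> eventually_at_left_real[of "1 - \<delta>" 1] by (simp add: eventually_at_filter)
  then have "((\<lambda>lam. THE u. is_minimiser w r lam M v u) \<longlongrightarrow> t) (at_left 1)"
    using unique by (intro tendsto_The_eventually_unique) (auto elim: eventually_mono)
  with \<delta> unique show ?thesis
    unfolding Let_def t_def threshold_profile_def S_def \<alpha>s_def M_def v_def
    by blast
qed

end
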